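(* Every double extended meta-interpreter $D$ is sound: for every definite program $P$, every atomic query $Q_0\in B^E_P$ and all terms $s_1,\dots,s_{n}$, if $\mathit{solve}(t_0,t_1,\dots,t_{n})$ is a computed answer for $\mathit{solve}(Q_0,s_1,\dots,s_{n})$ with respect to $D\cup\mathit{ce}^D(P)$, then $t_0$ is a correct answer for $Q_0$ with respect to $P$.
   Context: Logic programs are definite; $B^E_P$ is the set of atoms of the language of $P$ modulo variance; computed answers are w.r.t. SLD-resolution with the leftmost selection rule. A double extended meta-interpreter is a definite program consisting of three clauses of the form $\mathit{solve}(\mathit{true},t_{11},\dots,t_{1n})\leftarrow C_{11},\dots,C_{1m_1}.$ $\mathit{solve}((A,B),t_{21},\dots,t_{2n})\leftarrow D_{11},\dots,D_{1k_1},\mathit{solve}(A,t_{31},\dots,t_{3n}),D_{21},\dots,D_{2k_2},\mathit{solve}(B,t_{41},\dots,t_{4n}),C_{21},\dots,C_{2m_2}.$ $\mathit{solve}(A,t_{51},\dots,t_{5n})\leftarrow D_{31},\dots,D_{3k_3},\mathit{clause}(A,B,s_1,\dots,s_k),D_{41},\dots,D_{4k_4},\mathit{solve}(B,t_{61},\dots,t_{6n}),C_{31},\dots,C_{3m_3}.$ where $A,B$ are variables (the meta-variables), the $t_{ij},s_j$ are terms, together with clauses defining the other predicates occurring in the atoms $C_{kl},D_{pq}$, none of which contain $\mathit{solve}$ or $\mathit{clause}$. For a definite program $P$, a clause body $B_1,\dots,B_m$ is encoded as the term $(B_1,(B_2,\dots,B_m))$ using the binary functor $,/2$ and an empty body as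 $\mathit{true}$; $\mathit{ce}^D(P)$ is a set of facts $\mathit{clause}(H,B,s_1,\dots,s_k)$ such that for every clause $H\leftarrow B$ of $P$ there is a unique fact of the form $\mathit{clause}(H,B,\dots)$ in $\mathit{ce}^D(P)$ and every fact $\mathit{clause}(H,B,\dots)$ in $\mathit{ce}^D(P)$ comes from a clause $H\leftarrow B$ of $P$. The symbols $,/2$, $\mathit{clause}$, $\mathit{solve}$ do not occur in the language of $P$. *)

theory Defs
  imports Main
begin

datatype ('f, 'v) trm = Var 'v | Fun 'f "('f, 'v) trm list"

text \<open>Symbols: the reserved meta-level symbols solve, clause, the binary
  conjunction functor (comma) and true, plus user symbols.\<close>
datatype 'f sym = Solve | Clause | Comma | TrueS | Usr 'f

type_synonym ('f, 'v) subst = "'v \<Rightarrow> ('f, 'v) trm"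
type_synonym ('f, 'v) clause = "('f, 'v) trm \<times> ('f, 'v) trm list"

fun subst :: "('f, 'v) subst \<Rightarrow> ('f, 'v) trm \<Rightarrow> ('f, 'v) trm" where
  "subst \<sigma> (Var x) = \<sigma> x"
| "subst \<sigma> (Fun f ts) = Fun f (map (subst \<sigma>) ts)"

definition subst_comp :: "('f, 'v) subst \<Rightarrow> ('f, 'v) subst \<Rightarrow> ('f, 'v) subst" where
  "subst_comp \<sigma> \<tau> = (\<lambda>x. subst \<tau> (\<sigma> x))"

fun vars :: "('f, 'v) trm \<Rightarrow> 'v set" where
  "vars (Var x) = {x}"
| "vars (Fun f ts) = (\<Union>t\<in>set ts. vars t)"

fun funs :: "('f, 'v) trm \<Rightarrow> ('f \<times> nat) set" where
  "funs (Var x) = {}"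
| "funs (Fun f ts) = insert (f, length ts) (\<Union>t\<in>set ts. funs t)"

fun syms :: "('f, 'v) trm \<Rightarrow> 'f set" where
  "syms (Var x) = {}"
| "syms (Fun f ts) = insert f (\<Union>t\<in>set ts. syms t)"

definition is_atom :: "('f, 'v) trm \<Rightarrow> bool" where
  "is_atom a \<longleftrightarrow> (\<exists>p ts. a = Fun p ts)"

definition clause_vars :: "('f, 'v) clause \<Rightarrow> 'v set" where
  "clause_vars c = vars (fst c) \<union> (\<Union>b\<in>set (snd c). vars b)"

definition clause_atoms :: "('f, 'v) clause \<Rightarrow> ('f, 'v) trm set" where
  "clause_atoms c = insert (fst c) (set (snd c))"

definition subst_clause :: "('f, 'v) subst \<Rightarrow> ('f, 'v) clause \<Rightarrow> ('f, 'v) clause" where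
  "subst_clause \<sigma> c = (subst \<sigma> (fst c), map (subst \<sigma>) (snd c))"

definition variant :: "('f, 'v) clause \<Rightarrow> ('f, 'v) clause \<Rightarrow> bool" where
  "variant c c' \<longleftrightarrow> (\<exists>\<pi>. bij \<pi> \<and> c' = subst_clause (Var \<circ> \<pi>) c)"

definition is_mgu :: "('f, 'v) subst \<Rightarrow> ('f, 'v) trm \<Rightarrow> ('f, 'v) trm \<Rightarrow> bool" where
  "is_mgu \<sigma> s t \<longleftrightarrow> subst \<sigma> s = subst \<sigma> t \<and>
     (\<forall>\<tau>. subst \<tau> s = subst \<tau> t \<longrightarrow> (\<exists>\<rho>. \<tau> = subst_comp \<sigma> \<rho>))"

text \<open>sld_refutation Prg U G \<theta>: there is a successful SLD-derivation of the goal G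
  (list of atoms) w.r.t. program Prg, via the leftmost selection rule, whose
  composed mgu is \<theta>; U is the set of variables already used (initial query,
  previously used clause variants and the variables introduced by the mgus),
  from which each new clause variant must be standardized apart.\<close>
inductive sld_refutation ::
  "('f, 'v) clause set \<Rightarrow> 'v set \<Rightarrow> ('f, 'v) trm list \<Rightarrow> ('f, 'v) subst \<Rightarrow> bool"
  for Prg where
  empty: "sld_refutation Prg U [] Var"
| step: "\<lbrakk> c \<in> Prg; variant c (H, Bs); clause_vars (H, Bs) \<inter> U = {};
          is_mgu \<sigma> A H;
          sld_refutation Prg
             (U \<union> clause_vars (H, Bs) \<union> (\<Union>x\<in>U \<union> clause_vars (H, Bs). vars (\<sigma> x)))
             (map (subst \<sigma>) (Bs @ G)) \<theta> \<rbrakk>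
        \<Longrightarrow> sld_refutation Prg U (A # G) (subst_comp \<sigma> \<theta>)"

definition computed_answer :: "('f, 'v) clause set \<Rightarrow> ('f, 'v) trm \<Rightarrow> ('f, 'v) trm \<Rightarrow> bool" where
  "computed_answer Prg Q A \<longleftrightarrow> (\<exists>\<theta>. sld_refutation Prg (vars Q) [Q] \<theta> \<and> A = subst \<theta> Q)"

fun eval :: "('f \<Rightarrow> 'd list \<Rightarrow> 'd) \<Rightarrow> ('v \<Rightarrow> 'd) \<Rightarrow> ('f, 'v) trm \<Rightarrow> 'd" where
  "eval F \<alpha> (Var x) = \<alpha> x"
| "eval F \<alpha> (Fun f ts) = F f (map (eval F \<alpha>) ts)"

fun holds :: "('f \<Rightarrow> 'd list \<Rightarrow> 'd) \<Rightarrow> ('f \<Rightarrow> 'd list \<Rightarrow> bool) \<Rightarrow> ('v \<Rightarrow> 'd)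
               \<Rightarrow> ('f, 'v) trm \<Rightarrow> bool" where
  "holds F R \<alpha> (Var x) = False"
| "holds F R \<alpha> (Fun p ts) = R p (map (eval F \<alpha>) ts)"

definition is_model :: "('f \<Rightarrow> 'd list \<Rightarrow> 'd) \<Rightarrow> ('f \<Rightarrow> 'd list \<Rightarrow> bool)
                          \<Rightarrow> ('f, 'v) clause set \<Rightarrow> bool" where
  "is_model F R Prg \<longleftrightarrow>
     (\<forall>c\<in>Prg. \<forall>\<alpha>. (\<forall>b\<in>set (snd c). holds F R \<alpha> b) \<longrightarrow> holds F R \<alpha> (fst c))"

text \<open>Prg \<Turnstile> \<forall>A, over all interpretations with domain 'd; the theorem below
  is stated for an arbitrary type 'd, i.e. for all domains.\<close>
definition entails :: "'d itself \<Rightarrow> ('f, 'v) clause set \<Rightarrow> ('f, 'v) trm \<Rightarrow> bool" where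
  "entails _ Prg A \<longleftrightarrow>
     (\<forall>(F :: 'f \<Rightarrow> 'd list \<Rightarrow> 'd) R. is_model F R Prg \<longrightarrow> (\<forall>\<alpha>. holds F R \<alpha> A))"

definition correct_answer :: "'d itself \<Rightarrow> ('f, 'v) clause set \<Rightarrow> ('f, 'v) trm \<Rightarrow> ('f, 'v) trm \<Rightarrow> bool" where
  "correct_answer d Prg Q A \<longleftrightarrow> (\<exists>\<theta>. A = subst \<theta> Q) \<and> entails d Prg A"

definition pred_syms :: "('f, 'v) clause set \<Rightarrow> ('f \<times> nat) set" where
  "pred_syms Prg = {(p, length ts) | p ts. \<exists>c\<in>Prg. Fun p ts \<in> clause_atoms c}"

definition fun_syms :: "('f, 'v) clause set \<Rightarrow> ('f \<times> nat) set" where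
  "fun_syms Prg = {fa. \<exists>c\<in>Prg. \<exists>p ts. Fun p ts \<in> clause_atoms c \<and> (\<exists>t\<in>set ts. fa \<in> funs t)}"

definition user_sym :: "'f sym \<Rightarrow> bool" where
  "user_sym s \<longleftrightarrow> (\<exists>f. s = Usr f)"

definition definite_program :: "('f sym, 'v) clause set \<Rightarrow> bool" where
  "definite_program P \<longleftrightarrow> finite P \<and>
     (\<forall>c\<in>P. \<forall>a\<in>clause_atoms c. is_atom a \<and> (\<forall>s\<in>syms a. user_sym s))"

definition ext_base :: "('f, 'v) clause set \<Rightarrow> ('f, 'v) trm set" where
  "ext_base Prg = {Fun p ts | p ts. (p, length ts) \<in> pred_syms Prg \<and>
                      (\<forall>t\<in>set ts. funs t \<subseteq> fun_syms Prg)}"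

fun enc_body :: "('f sym, 'v) trm list \<Rightarrow> ('f sym, 'v) trm" where
  "enc_body [] = Fun TrueS []"
| "enc_body [b] = b"
| "enc_body (b # bs) = Fun Comma [b, enc_body bs]"

definition is_ce :: "nat \<Rightarrow> ('f sym, 'v) clause set \<Rightarrow> ('f sym, 'v) clause set \<Rightarrow> bool" where
  "is_ce k P CE \<longleftrightarrow>
     (\<forall>c\<in>CE. \<exists>H Bs ss. c = (Fun Clause (H # enc_body Bs # ss), []) \<and> (H, Bs) \<in> P
                         \<and> length ss = k) \<and>
     (\<forall>c\<in>P. \<exists>!f\<in>CE. \<exists>ss. f = (Fun Clause (fst c # enc_body (snd c) # ss), []))"

definition no_meta :: "('f sym, 'v) trm \<Rightarrow> bool" where
  "no_meta a \<longleftrightarrow> Solve \<notin> syms a \<and> Clause \<notin> syms a"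

definition double_ext_mi :: "nat \<Rightarrow> nat \<Rightarrow> ('f sym, 'v) clause set \<Rightarrow> bool" where
  "double_ext_mi n k D \<longleftrightarrow>
    (\<exists>A B t1 t2 t3 t4 t5 t6 s C1 C2 C3 D1 D2 D3 D4 Aux.
       A \<noteq> B \<and>
       length t1 = n \<and> length t2 = n \<and> length t3 = n \<and>
       length t4 = n \<and> length t5 = n \<and> length t6 = n \<and> length s = k \<and>
       (\<forall>a\<in>set (C1 @ C2 @ C3 @ D1 @ D2 @ D3 @ D4). is_atom a \<and> no_meta a) \<and>
       finite Aux \<and>
       (\<forall>c\<in>Aux. \<forall>a\<in>clause_atoms c. is_atom a \<and> no_meta a) \<and>
       D = {(Fun Solve (Fun TrueS [] # t1), C1),
            (Fun Solve (Fun Comma [Var A, Var B] # t2),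
               D1 @ [Fun Solve (Var A # t3)] @ D2 @ [Fun Solve (Var B # t4)] @ C2),
            (Fun Solve (Var A # t5),
               D3 @ [Fun Clause (Var A # Var B # s)] @ D4 @ [Fun Solve (Var B # t6)] @ C3)}
           \<union> Aux)"

end

theory Submission
  imports Defs
begin

text \<open>Read the meta-level atoms declaratively: solve(X, ...) means that the encoded conjunction X
  is true in every model of P, and clause(H, B, ...) means that the encoded body B implies H in
  every model of P; all other atoms are read as true. Under this reading every instance of a clause
  of D or of ce^D(P) is sound: the auxiliary atoms C, D in the bodies carry no obligation and the
  auxiliary clauses have no solve or clause head. SLD-resolution only computes instances that are
  supported by instances of program clauses, so the computed answer solve(t0, ...) is true under
  the reading, i.e. t0 holds in every model of P.\<close>

lemma subst_subst: "subst \<tau> (subst \<sigma> t) = subst (subst_comp \<sigma> \<tau>) t"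
  by (induction t) (auto simp: subst_comp_def)

lemma subst_comp_assoc: "subst_comp (subst_comp \<sigma> \<tau>) \<rho> = subst_comp \<sigma> (subst_comp \<tau> \<rho>)"
  by (simp add: subst_comp_def subst_subst)

lemma eval_subst: "eval F \<alpha> (subst \<sigma> t) = eval F (eval F \<alpha> \<circ> \<sigma>) t"
  by (induction t) (simp_all add: comp_def cong: map_cong)

lemma holds_subst_Fun:
  "holds F R \<alpha> (subst \<sigma> (Fun p ts)) = holds F R (eval F \<alpha> \<circ> \<sigma>) (Fun p ts)"
  by (simp add: eval_subst comp_def)

definition closed_under_clauses :: "(('f, 'v) trm \<Rightarrow> bool) \<Rightarrow> ('f, 'v) clause set \<Rightarrow> bool" where
  "closed_under_clauses Good Prg \<longleftrightarrow>
     (\<forall>c\<in>Prg. \<forall>\<tau>. (\<forall>b\<in>set (snd c). Good (subst \<tau> b)) \<longrightarrow> Good (subst \<tau> (fst c)))"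

lemma closed_under_clauses_Un:
  "closed_under_clauses Good Prg \<Longrightarrow> closed_under_clauses Good Prg'
   \<Longrightarrow> closed_under_clauses Good (Prg \<union> Prg')"
  by (auto simp: closed_under_clauses_def)

lemma sld_refutation_closed_under_clauses:
  assumes "sld_refutation Prg U G \<theta>" and closed: "closed_under_clauses Good Prg"
  shows "\<forall>a\<in>set G. Good (subst \<theta> a)"
  using assms(1)
proof (induction rule: sld_refutation.induct)
  case empty
  then show ?case by simp
next
  case (step c H Bs U \<sigma> A G \<theta>)
  from \<open>variant c (H, Bs)\<close> obtain \<pi> where "(H, Bs) = subst_clause (Var \<circ> \<pi>) c"
    unfolding variant_def by blast
  then have H: "H = subst (Var \<circ> \<pi>) (fst c)" and Bs: "Bs = map (subst (Var \<circ> \<pi>)) (snd c)"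
    by (auto simp: subst_clause_def)
  define \<tau> where "\<tau> = subst_comp (Var \<circ> \<pi>) (subst_comp \<sigma> \<theta>)"
  have body: "Good (subst \<tau> b)" if "b \<in> set (snd c)" for b
  proof -
    have "subst \<sigma> (subst (Var \<circ> \<pi>) b) \<in> set (map (subst \<sigma>) (Bs @ G))"
      using that by (simp add: Bs)
    then have "Good (subst \<theta> (subst \<sigma> (subst (Var \<circ> \<pi>) b)))"
      using step.IH by blast
    then show ?thesis
      by (simp add: \<tau>_def subst_subst subst_comp_assoc)
  qed
  have "subst (subst_comp \<sigma> \<theta>) A = subst \<theta> (subst \<sigma> H)"
    using \<open>is_mgu \<sigma> A H\<close> by (simp add: is_mgu_def flip: subst_subst)
  also have "\<dots> = subst \<tau> (fst c)"
    by (simp add: H \<tau>_def subst_subst subst_comp_assoc)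
  finally have "Good (subst (subst_comp \<sigma> \<theta>) A)"
    using closed \<open>c \<in> Prg\<close> body by (simp add: closed_under_clauses_def)
  moreover have "\<forall>a\<in>set G. Good (subst (subst_comp \<sigma> \<theta>) a)"
    using step.IH by (auto simp flip: subst_subst)
  ultimately show ?case by simp
qed

fun holds_body :: "('f sym \<Rightarrow> 'd list \<Rightarrow> 'd) \<Rightarrow> ('f sym \<Rightarrow> 'd list \<Rightarrow> bool) \<Rightarrow> ('v \<Rightarrow> 'd)
                    \<Rightarrow> ('f sym, 'v) trm \<Rightarrow> bool" where
  "holds_body F R \<alpha> (Fun TrueS []) = True"
| "holds_body F R \<alpha> (Fun Comma [a, b]) = (holds_body F R \<alpha> a \<and> holds_body F R \<alpha> b)"
| "holds_body F R \<alpha> t = holds F R \<alpha> t"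

definition user_atom :: "('f sym, 'v) trm \<Rightarrow> bool" where
  "user_atom a \<longleftrightarrow> (\<exists>p ts. a = Fun (Usr p) ts)"

lemma holds_body_user_atom: "user_atom a \<Longrightarrow> holds_body F R \<alpha> a = holds F R \<alpha> a"
  by (auto simp: user_atom_def)

lemma user_atom_subst: "user_atom a \<Longrightarrow> user_atom (subst \<sigma> a)"
  by (auto simp: user_atom_def)

lemma holds_body_enc_body:
  "\<forall>b\<in>set Bs. user_atom b \<Longrightarrow>
   holds_body F R \<alpha> (subst \<sigma> (enc_body Bs)) = (\<forall>b\<in>set Bs. holds F R \<alpha> (subst \<sigma> b))"
  by (induction Bs rule: enc_body.induct) (simp_all add: holds_body_user_atom user_atom_subst)

lemma definite_program_user_atom:
  "definite_program P \<Longrightarrow> c \<in> P \<Longrightarrow> a \<in> clause_atoms c \<Longrightarrow> user_atom a"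
  by (fastforce simp: definite_program_def is_atom_def user_sym_def user_atom_def)

lemma ext_base_user_atom: "definite_program P \<Longrightarrow> Q \<in> ext_base P \<Longrightarrow> user_atom Q"
  by (fastforce simp: ext_base_def pred_syms_def user_atom_def
      dest: definite_program_user_atom)

fun meta_sound :: "'d itself \<Rightarrow> ('f sym, 'v) clause set \<Rightarrow> ('f sym, 'v) trm \<Rightarrow> bool" where
  "meta_sound _ P (Fun Solve (X # _)) \<longleftrightarrow>
     (\<forall>(F :: 'f sym \<Rightarrow> 'd list \<Rightarrow> 'd) R. is_model F R P \<longrightarrow> (\<forall>\<alpha>. holds_body F R \<alpha> X))"
| "meta_sound _ P (Fun Clause (H # B # _)) \<longleftrightarrow>
     (\<forall>(F :: 'f sym \<Rightarrow> 'd list \<Rightarrow> 'd) R. is_model F R P \<longrightarrow>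
        (\<forall>\<alpha>. holds_body F R \<alpha> B \<longrightarrow> holds_body F R \<alpha> H))"
| "meta_sound _ P _ \<longleftrightarrow> True"

lemma meta_sound_Fun_other: "p \<noteq> Solve \<Longrightarrow> p \<noteq> Clause \<Longrightarrow> meta_sound d P (Fun p ts)"
  by (cases p) auto

lemma double_ext_mi_closed_under_clauses:
  assumes "double_ext_mi n k D"
  shows "closed_under_clauses (meta_sound d P) D"
proof -
  obtain A B t1 t2 t3 t4 t5 t6 s C1 C2 C3 D1 D2 D3 D4 Aux where
    aux: "\<forall>c\<in>Aux. \<forall>a\<in>clause_atoms c. is_atom a \<and> no_meta a" and
    "D = {(Fun Solve (Fun TrueS [] # t1), C1),
          (Fun Solve (Fun Comma [Var A, Var B] # t2),
             D1 @ [Fun Solve (Var A # t3)] @ D2 @ [Fun Solve (Var B # t4)] @ C2),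
          (Fun Solve (Var A # t5),
             D3 @ [Fun Clause (Var A # Var B # s)] @ D4 @ [Fun Solve (Var B # t6)] @ C3)}
         \<union> Aux"
    using assms unfolding double_ext_mi_def by blast
  moreover have "meta_sound d P (subst \<tau> (fst c))" if c: "c \<in> Aux" for c \<tau>
  proof -
    have "is_atom (fst c)" "no_meta (fst c)"
      using aux c by (simp_all add: clause_atoms_def)
    then obtain p ts where "fst c = Fun p ts" "p \<noteq> Solve" "p \<noteq> Clause"
      by (auto simp: is_atom_def no_meta_def)
    then show ?thesis by (simp add: meta_sound_Fun_other)
  qed
  ultimately show ?thesis
    by (auto simp: closed_under_clauses_def)
qed

lemma clause_encoding_closed_under_clauses:
  fixes d :: "'d itself" and P :: "('f sym, 'v) clause set"
  assumes "is_ce k P CE" and P: "definite_program P"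
  shows "closed_under_clauses (meta_sound d P) CE"
  unfolding closed_under_clauses_def
proof (intro ballI allI impI)
  fix c \<tau>
  assume "c \<in> CE"
  then obtain H Bs ss where c: "c = (Fun Clause (H # enc_body Bs # ss), [])" and HBs: "(H, Bs) \<in> P"
    using assms(1) unfolding is_ce_def by blast
  have "user_atom H" and Bs: "\<forall>b\<in>set Bs. user_atom b"
    using definite_program_user_atom[OF P HBs] by (auto simp: clause_atoms_def)
  have "holds_body F R \<alpha> (subst \<tau> H)"
    if "is_model F R P" and "holds_body F R \<alpha> (subst \<tau> (enc_body Bs))"
    for F :: "'f sym \<Rightarrow> 'd list \<Rightarrow> 'd" and R \<alpha>
  proof -
    have "\<forall>b\<in>set Bs. holds F R \<alpha> (subst \<tau> b)"
      using that(2) Bs by (simp add: holds_body_enc_body)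
    then have "\<forall>b\<in>set Bs. holds F R (eval F \<alpha> \<circ> \<tau>) b"
      using Bs by (metis holds_subst_Fun user_atom_def)
    then have "holds F R (eval F \<alpha> \<circ> \<tau>) H"
      using \<open>is_model F R P\<close> HBs unfolding is_model_def by fastforce
    then show ?thesis
      using \<open>user_atom H\<close>
      by (metis holds_body_user_atom holds_subst_Fun user_atom_def user_atom_subst)
  qed
  then show "meta_sound d P (subst \<tau> (fst c))"
    by (simp add: c)
qed

theorem mainTheorem5:
  fixes D P CE :: "('f sym, 'v) clause set"
    and Q0 t0 :: "('f sym, 'v) trm"
    and ss ts :: "('f sym, 'v) trm list"
  assumes "double_ext_mi n k D"
    and "definite_program P"
    and "is_ce k P CE"
    and "Q0 \<in> ext_base P"
    and "length ss = n"
    and "computed_answer (D \<union> CE) (Fun Solve (Q0 # ss)) (Fun Solve (t0 # ts))"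
  shows "correct_answer TYPE('d) P Q0 t0"
proof -
  obtain \<theta> where
    refutation: "sld_refutation (D \<union> CE) (vars (Fun Solve (Q0 # ss))) [Fun Solve (Q0 # ss)] \<theta>"
    and t0: "t0 = subst \<theta> Q0"
    using assms(6) unfolding computed_answer_def by auto
  have closed: "closed_under_clauses (meta_sound TYPE('d) P) (D \<union> CE)"
    using assms(1-3) by (intro closed_under_clauses_Un double_ext_mi_closed_under_clauses
        clause_encoding_closed_under_clauses)
  have "meta_sound TYPE('d) P (Fun Solve (t0 # map (subst \<theta>) ss))"
    using sld_refutation_closed_under_clauses[OF refutation closed] t0 by simp
  moreover have "user_atom t0"
    using ext_base_user_atom[OF assms(2,4)] t0 by (simp add: user_atom_subst)
  ultimately have "entails TYPE('d) P t0"
    by (simp add: entails_def holds_body_user_atom)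
  with t0 show ?thesis
    unfolding correct_answer_def by blast
qed

end
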